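(* For every set $X\subseteq\omega$ there is a family $(A_f)_{f\in 2^\omega}$ of infinite subsets of $\omega$ such that for all distinct $f,g\in 2^\omega$, the sets $A_f$ and $A_g$ are $X$ bi-immune.
   Context: For $X,A,B\subseteq\omega$, $A$ and $B$ are called $X$ bi-immune if for every partial $X$-computable function $h$ with infinite range there is some $a\in A$ with $h(a)$ defined and $h(a)\notin B$, and there is some $b\in B$ with $h(b)$ defined and $h(b)\notin A$. *)

theory Defs
  imports Main "HOL-Library.Nat_Bijection"
begin

text \<open>Partial recursive functions relative to an oracle X, as unary functions on nat
  (tuples coded with prod_encode). Kleene-style term syntax with big-step semantics.\<close>

datatype rf = Zer | Suc_f | Idt | Fst_f | Snd_f | Orc
  | Comp rf rf | Pair_f rf rf | Prec rf rf | Mu rf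

inductive eval_rf :: "nat set \<Rightarrow> rf \<Rightarrow> nat \<Rightarrow> nat \<Rightarrow> bool" for X :: "nat set" where
  zer: "eval_rf X Zer n 0"
| suc: "eval_rf X Suc_f n (Suc n)"
| idt: "eval_rf X Idt n n"
| fst: "eval_rf X Fst_f n (fst (prod_decode n))"
| snd: "eval_rf X Snd_f n (snd (prod_decode n))"
| orc: "eval_rf X Orc n (if n \<in> X then 1 else 0)"
| comp: "eval_rf X g n m \<Longrightarrow> eval_rf X f m k \<Longrightarrow> eval_rf X (Comp f g) n k"
| pair: "eval_rf X f n a \<Longrightarrow> eval_rf X g n b \<Longrightarrow> eval_rf X (Pair_f f g) n (prod_encode (a, b))"
| prec0: "eval_rf X f x y \<Longrightarrow> eval_rf X (Prec f g) (prod_encode (x, 0)) y"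
| precS: "eval_rf X (Prec f g) (prod_encode (x, k)) y \<Longrightarrow>
           eval_rf X g (prod_encode (x, prod_encode (k, y))) z \<Longrightarrow>
           eval_rf X (Prec f g) (prod_encode (x, Suc k)) z"
| mu: "eval_rf X f (prod_encode (n, k)) 0 \<Longrightarrow>
       (\<forall>j<k. \<exists>m. eval_rf X f (prod_encode (n, j)) (Suc m)) \<Longrightarrow>
       eval_rf X (Mu f) n k"

definition partial_comp_in :: "nat set \<Rightarrow> (nat \<Rightarrow> nat option) \<Rightarrow> bool" where
  "partial_comp_in X h \<longleftrightarrow> (\<exists>t. \<forall>n m. h n = Some m \<longleftrightarrow> eval_rf X t n m)"

definition bi_immune :: "nat set \<Rightarrow> nat set \<Rightarrow> nat set \<Rightarrow> bool" where
  "bi_immune X A B \<longleftrightarrow>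
     (\<forall>h. partial_comp_in X h \<and> infinite (ran h) \<longrightarrow>
        (\<exists>a\<in>A. \<exists>v. h a = Some v \<and> v \<notin> B) \<and>
        (\<exists>b\<in>B. \<exists>v. h b = Some v \<and> v \<notin> A))"

end

theory Submission
  imports Defs "HOL-Library.Countable_Set"
begin

(* Nothing about oracle computation is needed beyond the fact that
   there are only countably many partial X-computable functions.  For an arbitrary
   countable family F of partial functions we build, in stages, pairwise fresh
   pairs (arg n, val n): at stage n both numbers avoid everything chosen before,
   and val n = h n (arg n) whenever the function h n attended to at stage n has
   infinite range (infinitely many values leave room to avoid a finite set).
   Enumerate all triples (h, k, b) with h in F, k a position, b a bit, and let
   A f collect arg n for the stages n whose triple (h, k, b) satisfies f k = b.
   If f k ~= g k, the stage n attending to (h, k, f k) puts arg n into A f, and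
   h (arg n) = val n lies outside A g: val n differs from the arg of every other
   stage, and arg n itself is excluded from A g because g k ~= f k. *)

lemma fresh_witness_exists:
  fixes h :: "nat \<Rightarrow> nat option"
  assumes "finite S"
  shows "\<exists>a v. a \<notin> S \<and> v \<notin> S \<and> (infinite (ran h) \<longrightarrow> h a = Some v)"
proof (cases "infinite (ran h)")
  case False
  obtain x where "x \<notin> S" using assms infinite_UNIV_nat ex_new_if_finite by meson
  then show ?thesis using False by blast
next
  case True
  let ?blocked = "S \<union> the ` h ` S"
  have "finite ?blocked" using assms by blast
  then have "\<not> ran h \<subseteq> ?blocked" using True finite_subset by blast
  then obtain v where v: "v \<in> ran h" "v \<notin> ?blocked" by blast
  then obtain a where a: "h a = Some v" unfolding ran_def by blast
  have "a \<notin> S"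
  proof
    assume "a \<in> S"
    then have "v \<in> the ` h ` S" using a by force
    then show False using v by blast
  qed
  then show ?thesis using a v True by blast
qed

definition fresh_witness :: "(nat \<Rightarrow> nat option) \<Rightarrow> nat set \<Rightarrow> nat \<times> nat" where
  "fresh_witness h S =
     (SOME p. fst p \<notin> S \<and> snd p \<notin> S \<and> (infinite (ran h) \<longrightarrow> h (fst p) = Some (snd p)))"

lemma fresh_witness_spec:
  assumes "finite S"
  shows "fst (fresh_witness h S) \<notin> S \<and> snd (fresh_witness h S) \<notin> S \<and>
         (infinite (ran h) \<longrightarrow> h (fst (fresh_witness h S)) = Some (snd (fresh_witness h S)))"
proof -
  from fresh_witness_exists[OF assms, of h] obtain a v
    where "a \<notin> S \<and> v \<notin> S \<and> (infinite (ran h) \<longrightarrow> h a = Some v)" by blast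
  then show ?thesis
    unfolding fresh_witness_def
    using someI[of "\<lambda>p. fst p \<notin> S \<and> snd p \<notin> S \<and>
                       (infinite (ran h) \<longrightarrow> h (fst p) = Some (snd p))" "(a, v)"]
    by simp
qed

primrec used :: "(nat \<Rightarrow> nat \<Rightarrow> nat option) \<Rightarrow> nat \<Rightarrow> nat set" where
  "used H 0 = {}"
| "used H (Suc n) = used H n \<union> {fst (fresh_witness (H n) (used H n)),
                                  snd (fresh_witness (H n) (used H n))}"

definition arg :: "(nat \<Rightarrow> nat \<Rightarrow> nat option) \<Rightarrow> nat \<Rightarrow> nat" where
  "arg H n = fst (fresh_witness (H n) (used H n))"

definition val :: "(nat \<Rightarrow> nat \<Rightarrow> nat option) \<Rightarrow> nat \<Rightarrow> nat" where
  "val H n = snd (fresh_witness (H n) (used H n))"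

lemma finite_used: "finite (used H n)"
  by (induction n) auto

lemma stage_witness:
  "arg H n \<notin> used H n" "val H n \<notin> used H n"
  "infinite (ran (H n)) \<Longrightarrow> H n (arg H n) = Some (val H n)"
  using fresh_witness_spec[OF finite_used, of "H n" H n] unfolding arg_def val_def by auto

lemma chosen_before_is_used:
  assumes "m < n"
  shows "arg H m \<in> used H n" "val H m \<in> used H n"
proof -
  have "Suc m \<le> n" using assms by simp
  then have "used H (Suc m) \<subseteq> used H n"
    by (induction n rule: dec_induct) auto
  then show "arg H m \<in> used H n" "val H m \<in> used H n"
    by (auto simp: arg_def val_def)
qed

lemma stages_separated:
  assumes "m \<noteq> n"
  shows "arg H m \<noteq> arg H n" "arg H m \<noteq> val H n"
proof -
  have "arg H m \<notin> {arg H n, val H n}"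
  proof (cases "m < n")
    case True
    then show ?thesis
      using chosen_before_is_used(1)[OF True, of H] stage_witness(1,2)[of H n] by auto
  next
    case False
    then have "n < m" using assms by linarith
    then show ?thesis
      using chosen_before_is_used[OF \<open>n < m\<close>, of H] stage_witness(1)[of H m] by auto
  qed
  then show "arg H m \<noteq> arg H n" "arg H m \<noteq> val H n" by auto
qed

type_synonym requirement = "(nat \<Rightarrow> nat option) \<times> nat \<times> bool"

definition family :: "(nat \<Rightarrow> requirement) \<Rightarrow> (nat \<Rightarrow> bool) \<Rightarrow> nat set" where
  "family R f = {arg (fst \<circ> R) n | n. f (fst (snd (R n))) = snd (snd (R n))}"

text \<open>If some function is paired with every position and bit, each member of the
  family is infinite: the stages for (h, k, f k) yield distinct arguments.\<close>

lemma family_infinite: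
  assumes enum: "\<And>k b. \<exists>n. R n = (h, k, b)"
  shows "infinite (family R f)"
proof -
  have "\<forall>k. \<exists>n. R n = (h, k, f k)" using enum by blast
  then have "\<exists>stage. \<forall>k. R (stage k) = (h, k, f k)" by (rule choice)
  then obtain stage where stage: "\<And>k. R (stage k) = (h, k, f k)" by blast
  let ?elem = "\<lambda>k. arg (fst \<circ> R) (stage k)"
  have "inj ?elem"
  proof (rule injI)
    fix k l assume "?elem k = ?elem l"
    then have "stage k = stage l" using stages_separated(1)[of "stage k" "stage l"] by auto
    then have "R (stage k) = R (stage l)" by simp
    then show "k = l" using stage by simp
  qed
  then have "infinite (range ?elem)" by (rule range_inj_infinite)
  moreover have "range ?elem \<subseteq> family R f"
  proof (rule subsetI)
    fix x assume "x \<in> range ?elem"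
    then obtain k where "x = ?elem k" by blast
    then show "x \<in> family R f"
      unfolding family_def by (intro CollectI exI[of _ "stage k"]) (simp add: stage)
  qed
  ultimately show ?thesis by (rule infinite_super[rotated])
qed

lemma family_diagonalises:
  assumes enum: "\<And>k b. \<exists>n. R n = (h, k, b)"
    and inf: "infinite (ran h)" and "f \<noteq> g"
  shows "\<exists>a\<in>family R f. \<exists>v. h a = Some v \<and> v \<notin> family R g"
proof -
  let ?H = "fst \<circ> R"
  obtain k where k: "f k \<noteq> g k" using \<open>f \<noteq> g\<close> by (auto simp: fun_eq_iff)
  obtain n where n: "R n = (h, k, f k)" using enum by blast
  have in_f: "arg ?H n \<in> family R f"
    unfolding family_def by (intro CollectI exI[of _ n]) (simp add: n)
  have maps: "h (arg ?H n) = Some (val ?H n)"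
    using stage_witness(3)[of ?H n] n inf by simp
  have "val ?H n \<notin> family R g"
  proof
    assume "val ?H n \<in> family R g"
    then obtain m where m: "val ?H n = arg ?H m" "g (fst (snd (R m))) = snd (snd (R m))"
      unfolding family_def by blast
    show False
    proof (cases "m = n")
      case True
      then show False using m(2) n k by simp
    next
      case False
      then show False using stages_separated(2)[OF False, of ?H] m(1) by simp
    qed
  qed
  then show ?thesis using in_f maps by blast
qed

theorem perfect_family_against_countable:
  fixes F :: "(nat \<Rightarrow> nat option) set"
  assumes "countable F"
  shows "\<exists>A :: (nat \<Rightarrow> bool) \<Rightarrow> nat set. (\<forall>f. infinite (A f)) \<and>
           (\<forall>f g h. f \<noteq> g \<and> h \<in> F \<and> infinite (ran h) \<longrightarrow>
              (\<exists>a\<in>A f. \<exists>v. h a = Some v \<and> v \<notin> A g))"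
proof -
  let ?Reqs = "insert Map.empty F \<times> (UNIV :: nat set) \<times> (UNIV :: bool set)"
  define R where "R = from_nat_into ?Reqs"
  have "countable ?Reqs" using assms by (intro countable_SIGMA countable_insert) simp_all
  then have "?Reqs \<subseteq> range R"
    unfolding R_def by (rule subset_range_from_nat_into)
  then have enum: "\<exists>n. R n = (h, k, b)" if "h \<in> insert Map.empty F" for h k b
  proof -
    have "(h, k, b) \<in> range R" using \<open>?Reqs \<subseteq> range R\<close> that by auto
    then show ?thesis by (metis rangeE)
  qed
  have "infinite (family R f)" for f
    using enum[of Map.empty] by (intro family_infinite) simp
  moreover have "\<exists>a\<in>family R f. \<exists>v. h a = Some v \<and> v \<notin> family R g"
    if "f \<noteq> g" "h \<in> F" "infinite (ran h)" for f g h
    using enum[of h] that by (intro family_diagonalises) simp_all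
  ultimately show ?thesis by (intro exI[of _ "family R"]) blast
qed

text \<open>A program determines its partial function uniquely, and there are only
  countably many programs.\<close>

instance rf :: countable by countable_datatype

lemma program_determines_function:
  assumes "\<forall>n m. h n = Some m \<longleftrightarrow> eval_rf X t n m"
    and "\<forall>n m. h' n = Some m \<longleftrightarrow> eval_rf X t n m"
  shows "h = h'"
proof
  fix n
  have "h n = Some m \<longleftrightarrow> h' n = Some m" for m using assms by simp
  then show "h n = h' n" by (metis not_None_eq)
qed

lemma countable_partial_comp: "countable {h. partial_comp_in X h}"
proof -
  define computes where "computes t h \<longleftrightarrow> (\<forall>n m. h n = Some m \<longleftrightarrow> eval_rf X t n m)" for t h
  let ?fun_of = "\<lambda>t. SOME h. computes t h"
  have "{h. partial_comp_in X h} \<subseteq> range ?fun_of"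
  proof
    fix h assume "h \<in> {h. partial_comp_in X h}"
    then obtain t where t: "computes t h"
      unfolding partial_comp_in_def computes_def by blast
    then have "computes t (?fun_of t)" by (rule someI[of "computes t"])
    then have "h = ?fun_of t"
      using t unfolding computes_def by (rule program_determines_function[rotated])
    then show "h \<in> range ?fun_of" by (rule range_eqI)
  qed
  then show ?thesis by (rule countable_subset) simp
qed

theorem lemma4p2:
  fixes X :: "nat set"
  shows "\<exists>A :: (nat \<Rightarrow> bool) \<Rightarrow> nat set.
           (\<forall>f. infinite (A f)) \<and>
           (\<forall>f g. f \<noteq> g \<longrightarrow> bi_immune X (A f) (A g))"
proof -
  obtain A :: "(nat \<Rightarrow> bool) \<Rightarrow> nat set"
    where inf: "\<forall>f. infinite (A f)"
      and sep: "\<forall>f g h. f \<noteq> g \<and> h \<in> {h. partial_comp_in X h} \<and> infinite (ran h) \<longrightarrow>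
                  (\<exists>a\<in>A f. \<exists>v. h a = Some v \<and> v \<notin> A g)"
    using perfect_family_against_countable[OF countable_partial_comp] by blast
  have "bi_immune X (A f) (A g)" if "f \<noteq> g" for f g
    unfolding bi_immune_def
  proof (intro allI impI conjI)
    fix h assume h: "partial_comp_in X h \<and> infinite (ran h)"
    show "\<exists>a\<in>A f. \<exists>v. h a = Some v \<and> v \<notin> A g"
      using sep[rule_format, of f g h] h that by simp
    show "\<exists>b\<in>A g. \<exists>v. h b = Some v \<and> v \<notin> A f"
      using sep[rule_format, of g f h] h that by simp
  qed
  then show ?thesis using inf by blast
qed

end
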